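(* Let $E$ be a finite set and $\P$ a poset on $E$. Suppose $\mathcal{B}$ is the set of bases of some U-matroid with characteristic poset $\P$. Then $\mathcal{B}^*=\{E\setminus B: B\in\mathcal{B}\}$ is the set of bases of a U-matroid with characteristic poset $\P^*$ (the dual poset of $\P$, obtained by reversing all relations).
   Context: A U-matroid is a triple $(E,\mathcal{D},\rho)$ with $\mathcal{D}\subseteq2^E$ an accessible distributive lattice (containing $\emptyset,E$, closed under $\cup,\cap$, each nonempty $A\in\mathcal{D}$ has some $x$ with $A\setminus\{x\}\in\mathcal{D}$) and $\rho:\mathcal{D}\to\mathbb{N}$ satisfying $\rho(\emptyset)=0$; $\rho(A)\le\rho(B)$ for $A\subseteq B$; $\rho(A)+\rho(B)\ge\rho(A\cup B)+\rho(A\cap B)$; and $\rho(A\cup\{e\})-\rho(A)\le1$ whenever $A,A\cup\{e\}\in\mathcal{D}$. Its characteristic poset is the poset on $E$ with $i\le j$ iff every element of $\mathcal{D}$ containing $j$ also contains $i$ (so $\mathcal{D}$ is the lattice of order ideals of this poset). Its bases are the supports of the vertices of the base polyhedron $\{\mathbf{x}\in\mathbb{R}^E:\sum_{a\in A}x_a\le\rho(A)\ \forall A\in\mathcal{D},\ \sum_{e\in E}x_e=\rho(E)\}$. *)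

theory Defs
  imports Complex_Main
begin

definition accessible_distrib_lattice :: "'a set \<Rightarrow> 'a set set \<Rightarrow> bool" where
  "accessible_distrib_lattice E D \<longleftrightarrow>
     D \<subseteq> Pow E \<and> {} \<in> D \<and> E \<in> D \<and>
     (\<forall>A\<in>D. \<forall>B\<in>D. A \<union> B \<in> D \<and> A \<inter> B \<in> D) \<and>
     (\<forall>A\<in>D. A \<noteq> {} \<longrightarrow> (\<exists>x\<in>A. A - {x} \<in> D))"

text \<open>U-matroid (E, D, rho); rho only matters on D.\<close>
definition umatroid :: "'a set \<Rightarrow> 'a set set \<Rightarrow> ('a set \<Rightarrow> nat) \<Rightarrow> bool" where
  "umatroid E D \<rho> \<longleftrightarrow>
     accessible_distrib_lattice E D \<and>
     \<rho> {} = 0 \<and>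
     (\<forall>A\<in>D. \<forall>B\<in>D. A \<subseteq> B \<longrightarrow> \<rho> A \<le> \<rho> B) \<and>
     (\<forall>A\<in>D. \<forall>B\<in>D. \<rho> A + \<rho> B \<ge> \<rho> (A \<union> B) + \<rho> (A \<inter> B)) \<and>
     (\<forall>A\<in>D. \<forall>e. A \<union> {e} \<in> D \<longrightarrow> \<rho> (A \<union> {e}) \<le> \<rho> A + 1)"

text \<open>Characteristic poset: (i,j) in the relation means i \<le> j.\<close>
definition char_poset :: "'a set \<Rightarrow> 'a set set \<Rightarrow> ('a \<times> 'a) set" where
  "char_poset E D = {(i, j). i \<in> E \<and> j \<in> E \<and> (\<forall>A\<in>D. j \<in> A \<longrightarrow> i \<in> A)}"

definition base_polyhedron :: "'a set \<Rightarrow> 'a set set \<Rightarrow> ('a set \<Rightarrow> nat) \<Rightarrow> ('a \<Rightarrow> real) set" where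
  "base_polyhedron E D \<rho> =
     {x. (\<forall>e. e \<notin> E \<longrightarrow> x e = 0) \<and>
         (\<forall>A\<in>D. (\<Sum>a\<in>A. x a) \<le> real (\<rho> A)) \<and>
         (\<Sum>e\<in>E. x e) = real (\<rho> E)}"

definition vertex_of :: "('a \<Rightarrow> real) \<Rightarrow> ('a \<Rightarrow> real) set \<Rightarrow> bool" where
  "vertex_of x P \<longleftrightarrow> x \<in> P \<and>
     (\<forall>a\<in>P. \<forall>b\<in>P. \<forall>u::real. 0 < u \<and> u < 1 \<and> x = (\<lambda>e. u * a e + (1 - u) * b e) \<longrightarrow> a = b)"

definition umatroid_bases :: "'a set \<Rightarrow> 'a set set \<Rightarrow> ('a set \<Rightarrow> nat) \<Rightarrow> 'a set set" where
  "umatroid_bases E D \<rho> =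
     {{e \<in> E. x e \<noteq> 0} | x. vertex_of x (base_polyhedron E D \<rho>)}"

end

theory Submission
  imports Defs
begin

text \<open>Complementation \<open>A \<mapsto> E - A\<close> turns the order ideals of \<open>P\<close> into those of the
  reversed poset, and \<open>\<rho>*(X) = |X| + \<rho>(E - X) - \<rho>(E)\<close> is again a U-matroid rank function;
  everything rests on the bound \<open>\<rho>(B) \<le> \<rho>(A) + |B - A|\<close> for \<open>A \<subseteq> B\<close> in \<open>D\<close>, which
  accessibility yields by adding one element of \<open>B\<close> at a time.  The affine involution
  \<open>x \<mapsto> 1 - x\<close> on \<open>E\<close> maps the base polyhedron of \<open>\<rho>\<close> onto that of \<open>\<rho>*\<close>, hence vertices to
  vertices.  Finally every vertex is a 0/1 vector: its tight sets form a sublattice of \<open>D\<close>,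
  and for each \<open>e\<close> either there are tight sets \<open>N\<close> and \<open>N + e\<close> with \<open>e \<notin> N\<close>, giving
  \<open>x(e) = \<rho>(N + e) - \<rho>(N) \<in> {0, 1}\<close>, or \<open>e\<close> lies in exactly the
  same tight sets as some \<open>f \<noteq> e\<close>, and shifting a little mass between \<open>e\<close> and \<open>f\<close> in either
  direction stays in the polyhedron, which is impossible at a vertex.  Hence complementing a
  vertex complements its support.\<close>

lemma accessible_distrib_latticeD:
  assumes "accessible_distrib_lattice E D"
  shows accessible_distrib_lattice_subset: "D \<subseteq> Pow E"
    and accessible_distrib_lattice_empty: "{} \<in> D"
    and accessible_distrib_lattice_top: "E \<in> D"
    and accessible_distrib_lattice_Un: "A \<in> D \<Longrightarrow> B \<in> D \<Longrightarrow> A \<union> B \<in> D"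
    and accessible_distrib_lattice_Int: "A \<in> D \<Longrightarrow> B \<in> D \<Longrightarrow> A \<inter> B \<in> D"
    and accessible_distrib_lattice_remove: "A \<in> D \<Longrightarrow> A \<noteq> {} \<Longrightarrow> \<exists>x\<in>A. A - {x} \<in> D"
  using assms unfolding accessible_distrib_lattice_def by auto

lemma umatroidD:
  assumes "umatroid E D \<rho>"
  shows umatroid_lattice: "accessible_distrib_lattice E D"
    and umatroid_rank_empty: "\<rho> {} = 0"
    and umatroid_rank_mono: "A \<in> D \<Longrightarrow> B \<in> D \<Longrightarrow> A \<subseteq> B \<Longrightarrow> \<rho> A \<le> \<rho> B"
    and umatroid_rank_submodular:
      "A \<in> D \<Longrightarrow> B \<in> D \<Longrightarrow> \<rho> (A \<union> B) + \<rho> (A \<inter> B) \<le> \<rho> A + \<rho> B"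
    and umatroid_rank_insert: "A \<in> D \<Longrightarrow> insert e A \<in> D \<Longrightarrow> \<rho> (insert e A) \<le> \<rho> A + 1"
  using assms unfolding umatroid_def by auto

lemma accessible_distrib_lattice_finite:
  assumes "accessible_distrib_lattice E D" and "finite E" and "A \<in> D"
  shows "finite A"
proof -
  have "A \<subseteq> E"
    using accessible_distrib_lattice_subset[OF assms(1)] assms(3) by blast
  then show ?thesis
    using assms(2) by (rule finite_subset)
qed

section \<open>Rank increments along accessible chains\<close>

lemma accessible_distrib_lattice_augment:
  assumes lat: "accessible_distrib_lattice E D" and "finite E" and A: "A \<in> D"
  shows "C \<in> D \<Longrightarrow> \<not> C \<subseteq> A \<Longrightarrow> \<exists>x\<in>C - A. insert x A \<in> D"
proof (induction "card C" arbitrary: C rule: less_induct)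
  case less
  then obtain y where y: "y \<in> C" "C - {y} \<in> D"
    using accessible_distrib_lattice_remove[OF lat] by blast
  show ?case
  proof (cases "C - {y} \<subseteq> A")
    case True
    then have "y \<in> C - A" and "insert y A = A \<union> C"
      using y less.prems(2) by blast+
    then show ?thesis
      using accessible_distrib_lattice_Un[OF lat A less.prems(1)] by metis
  next
    case False
    have "finite C"
      using accessible_distrib_lattice_finite[OF lat \<open>finite E\<close> less.prems(1)] .
    then have "card (C - {y}) < card C"
      using y(1) by (rule card_Diff1_less)
    then obtain x where "x \<in> C - {y} - A" "insert x A \<in> D"
      using less.hyps y(2) False by blast
    then show ?thesis
      by blast
  qed
qed

lemma umatroid_rank_le_card_diff:
  assumes um: "umatroid E D \<rho>" and "finite E"
  shows "A \<in> D \<Longrightarrow> B \<in> D \<Longrightarrow> A \<subseteq> B \<Longrightarrow> \<rho> B \<le> \<rho> A + card (B - A)"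
proof (induction "card (B - A)" arbitrary: A rule: less_induct)
  case less
  show ?case
  proof (cases "B \<subseteq> A")
    case True
    with less.prems show ?thesis by simp
  next
    case False
    obtain x where x: "x \<in> B - A" "insert x A \<in> D"
      using accessible_distrib_lattice_augment[OF umatroid_lattice[OF um] \<open>finite E\<close>]
        less.prems False by blast
    have "finite (B - A)"
      using accessible_distrib_lattice_finite[OF umatroid_lattice[OF um] \<open>finite E\<close>
          less.prems(2)] by simp
    moreover have "B - insert x A = B - A - {x}"
      by blast
    ultimately have card_eq: "card (B - A) = Suc (card (B - insert x A))"
      using card_Suc_Diff1 x(1) by metis
    have "insert x A \<subseteq> B"
      using x(1) less.prems(3) by blast
    then have "\<rho> B \<le> \<rho> (insert x A) + card (B - insert x A)"
      using less.hyps[OF _ x(2) less.prems(2)] card_eq by simp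
    moreover have "\<rho> (insert x A) \<le> \<rho> A + 1"
      using umatroid_rank_insert[OF um less.prems(1) x(2)] .
    ultimately show ?thesis
      using card_eq by simp
  qed
qed

lemma umatroid_rank_top_le:
  assumes um: "umatroid E D \<rho>" and "finite E" and "A \<in> D"
  shows "\<rho> E \<le> \<rho> A + card (E - A)"
  using umatroid_rank_le_card_diff[OF assms
      accessible_distrib_lattice_top[OF umatroid_lattice[OF um]]]
    accessible_distrib_lattice_subset[OF umatroid_lattice[OF um]] \<open>A \<in> D\<close> by blast

section \<open>The dual U-matroid\<close>

definition dual_lattice :: "'a set \<Rightarrow> 'a set set \<Rightarrow> 'a set set" where
  "dual_lattice E D = (\<lambda>A. E - A) ` D"

text \<open>On complements of members of \<open>D\<close> the natural-number subtraction does not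
  truncate (by \<open>umatroid_rank_top_le\<close>), which \<open>dual_rank_compl\<close> records without subtraction.\<close>
definition dual_rank :: "'a set \<Rightarrow> ('a set \<Rightarrow> nat) \<Rightarrow> 'a set \<Rightarrow> nat" where
  "dual_rank E \<rho> X = card X + \<rho> (E - X) - \<rho> E"

lemma char_poset_dual_lattice: "char_poset E (dual_lattice E D) = (char_poset E D)\<inverse>"
  unfolding char_poset_def dual_lattice_def by blast

lemma accessible_distrib_lattice_dual:
  assumes lat: "accessible_distrib_lattice E D" and "finite E"
  shows "accessible_distrib_lattice E (dual_lattice E D)"
  unfolding accessible_distrib_lattice_def
proof (intro conjI ballI impI)
  show "dual_lattice E D \<subseteq> Pow E" "{} \<in> dual_lattice E D" "E \<in> dual_lattice E D"
    unfolding dual_lattice_def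
    using accessible_distrib_lattice_top[OF lat] accessible_distrib_lattice_empty[OF lat]
    by force+
next
  fix X Y assume "X \<in> dual_lattice E D" "Y \<in> dual_lattice E D"
  then obtain A B where "A \<in> D" "B \<in> D" "X = E - A" "Y = E - B"
    unfolding dual_lattice_def by blast
  moreover have "(E - A) \<union> (E - B) = E - (A \<inter> B)" "(E - A) \<inter> (E - B) = E - (A \<union> B)"
    by blast+
  ultimately show "X \<union> Y \<in> dual_lattice E D" "X \<inter> Y \<in> dual_lattice E D"
    unfolding dual_lattice_def
    using accessible_distrib_lattice_Int[OF lat] accessible_distrib_lattice_Un[OF lat]
    by auto
next
  fix X assume "X \<in> dual_lattice E D" "X \<noteq> {}"
  then obtain A where A: "A \<in> D" "X = E - A" and "\<not> E \<subseteq> A"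
    unfolding dual_lattice_def by blast
  then obtain x where "x \<in> E - A" "insert x A \<in> D"
    using accessible_distrib_lattice_augment[OF lat \<open>finite E\<close> A(1)
        accessible_distrib_lattice_top[OF lat]] by blast
  moreover have "X - {x} = E - insert x A"
    using A(2) by blast
  ultimately show "\<exists>x\<in>X. X - {x} \<in> dual_lattice E D"
    unfolding dual_lattice_def using A(2) by blast
qed

lemma dual_rank_compl:
  assumes "umatroid E D \<rho>" and "finite E" and "A \<in> D"
  shows "dual_rank E \<rho> (E - A) + \<rho> E = card (E - A) + \<rho> A"
proof -
  have "E - (E - A) = A"
    using assms(3) accessible_distrib_lattice_subset[OF umatroid_lattice[OF assms(1)]] by blast
  then show ?thesis
    using umatroid_rank_top_le[OF assms] by (simp add: dual_rank_def)
qed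

lemma dual_rank_mono:
  assumes um: "umatroid E D \<rho>" and "finite E" and A: "A \<in> D" and B: "B \<in> D" "B \<subseteq> A"
  shows "dual_rank E \<rho> (E - A) \<le> dual_rank E \<rho> (E - B)"
proof -
  have "A \<subseteq> E"
    using A accessible_distrib_lattice_subset[OF umatroid_lattice[OF um]] by blast
  then have "E - B = (E - A) \<union> (A - B)" and "finite (A - B)"
    using B(2) \<open>finite E\<close> finite_subset by blast+
  then have "card (E - B) = card (E - A) + card (A - B)"
    using \<open>finite E\<close> card_Un_disjoint[of "E - A" "A - B"] by auto
  moreover have "\<rho> A \<le> \<rho> B + card (A - B)"
    using umatroid_rank_le_card_diff[OF um \<open>finite E\<close> B(1) A B(2)] .
  ultimately show ?thesis
    using dual_rank_compl[OF um \<open>finite E\<close> A] dual_rank_compl[OF um \<open>finite E\<close> B(1)]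
    by linarith
qed

lemma dual_rank_submodular:
  assumes um: "umatroid E D \<rho>" and "finite E" and A: "A \<in> D" and B: "B \<in> D"
  shows "dual_rank E \<rho> ((E - A) \<union> (E - B)) + dual_rank E \<rho> ((E - A) \<inter> (E - B))
           \<le> dual_rank E \<rho> (E - A) + dual_rank E \<rho> (E - B)"
proof -
  have lat: "accessible_distrib_lattice E D"
    using um by (rule umatroid_lattice)
  have "(E - A) \<union> (E - B) = E - (A \<inter> B)" "(E - A) \<inter> (E - B) = E - (A \<union> B)"
    by blast+
  moreover have "card (E - (A \<inter> B)) + card (E - (A \<union> B)) = card (E - A) + card (E - B)"
    using card_Un_Int[of "E - A" "E - B"] \<open>finite E\<close> by (simp add: Diff_Int Diff_Un)
  moreover have "\<rho> (A \<union> B) + \<rho> (A \<inter> B) \<le> \<rho> A + \<rho> B"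
    using umatroid_rank_submodular[OF um A B] .
  ultimately show ?thesis
    using dual_rank_compl[OF um \<open>finite E\<close> A] dual_rank_compl[OF um \<open>finite E\<close> B]
      dual_rank_compl[OF um \<open>finite E\<close> accessible_distrib_lattice_Un[OF lat A B]]
      dual_rank_compl[OF um \<open>finite E\<close> accessible_distrib_lattice_Int[OF lat A B]]
    by simp
qed

lemma dual_rank_insert:
  assumes um: "umatroid E D \<rho>" and "finite E" and A: "A \<in> D" and B: "B \<in> D"
    and "E - B = insert e (E - A)"
  shows "dual_rank E \<rho> (E - B) \<le> dual_rank E \<rho> (E - A) + 1"
proof -
  have "B \<subseteq> A"
    using assms(5) A B accessible_distrib_lattice_subset[OF umatroid_lattice[OF um]] by blast
  then have "\<rho> B \<le> \<rho> A"
    using umatroid_rank_mono[OF um B A] by blast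
  moreover have "card (E - B) \<le> card (E - A) + 1"
    using assms(5) card_insert_le_m1 \<open>finite E\<close> by (simp add: card_insert_if)
  ultimately show ?thesis
    using dual_rank_compl[OF um \<open>finite E\<close> A] dual_rank_compl[OF um \<open>finite E\<close> B]
    by linarith
qed

lemma umatroid_dual:
  assumes um: "umatroid E D \<rho>" and "finite E"
  shows "umatroid E (dual_lattice E D) (dual_rank E \<rho>)"
  unfolding umatroid_def
proof (intro conjI ballI allI impI)
  show "accessible_distrib_lattice E (dual_lattice E D)"
    using accessible_distrib_lattice_dual[OF umatroid_lattice[OF um] \<open>finite E\<close>] .
  show "dual_rank E \<rho> {} = 0"
    by (simp add: dual_rank_def)
next
  fix X Y assume "X \<in> dual_lattice E D" "Y \<in> dual_lattice E D"
  then obtain A B where AB: "A \<in> D" "B \<in> D" and XY: "X = E - A" "Y = E - B"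
    unfolding dual_lattice_def by blast
  then show "dual_rank E \<rho> (X \<union> Y) + dual_rank E \<rho> (X \<inter> Y)
      \<le> dual_rank E \<rho> X + dual_rank E \<rho> Y"
    using dual_rank_submodular[OF um \<open>finite E\<close>] by blast
  assume "X \<subseteq> Y"
  then have "B \<subseteq> A"
    using AB XY accessible_distrib_lattice_subset[OF umatroid_lattice[OF um]] by blast
  then show "dual_rank E \<rho> X \<le> dual_rank E \<rho> Y"
    using dual_rank_mono[OF um \<open>finite E\<close>] AB XY by blast
next
  fix X e assume "X \<in> dual_lattice E D" "X \<union> {e} \<in> dual_lattice E D"
  then obtain A B where AB: "A \<in> D" "B \<in> D" and "X = E - A" "X \<union> {e} = E - B"
    unfolding dual_lattice_def by blast
  then show "dual_rank E \<rho> (X \<union> {e}) \<le> dual_rank E \<rho> X + 1"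
    using dual_rank_insert[OF um \<open>finite E\<close> AB, of e] by simp
qed

section \<open>Complementing the base polyhedron\<close>

lemma base_polyhedron_outside:
  "x \<in> base_polyhedron E D \<rho> \<Longrightarrow> e \<notin> E \<Longrightarrow> x e = 0"
  unfolding base_polyhedron_def by blast

definition compl_vec :: "'a set \<Rightarrow> ('a \<Rightarrow> real) \<Rightarrow> 'a \<Rightarrow> real" where
  "compl_vec E x e = (if e \<in> E then 1 - x e else 0)"

lemma compl_vec_compl_vec: "(\<And>e. e \<notin> E \<Longrightarrow> x e = 0) \<Longrightarrow> compl_vec E (compl_vec E x) = x"
  unfolding compl_vec_def by auto

lemma compl_vec_convex_combination:
  "compl_vec E (\<lambda>e. u * a e + (1 - u) * b e)
     = (\<lambda>e. u * compl_vec E a e + (1 - u) * compl_vec E b e)"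
  unfolding compl_vec_def by (auto simp: algebra_simps)

lemma sum_compl_vec: "A \<subseteq> E \<Longrightarrow> sum (compl_vec E x) A = real (card A) - sum x A"
  by (simp add: compl_vec_def subset_iff sum_subtractf)

lemma compl_vec_mem_dual_base_polyhedron_iff:
  assumes um: "umatroid E D \<rho>" and "finite E" and outside: "\<And>e. e \<notin> E \<Longrightarrow> x e = 0"
  shows "compl_vec E x \<in> base_polyhedron E (dual_lattice E D) (dual_rank E \<rho>)
           \<longleftrightarrow> x \<in> base_polyhedron E D \<rho>"
proof -
  have lat: "accessible_distrib_lattice E D"
    using um by (rule umatroid_lattice)
  have "real (dual_rank E \<rho> E) + real (\<rho> E) = real (card E)"
    using dual_rank_compl[OF um \<open>finite E\<close> accessible_distrib_lattice_empty[OF lat]]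
      umatroid_rank_empty[OF um] by (simp flip: of_nat_add)
  then have top: "sum (compl_vec E x) E = real (dual_rank E \<rho> E) \<longleftrightarrow> sum x E = real (\<rho> E)"
    using sum_compl_vec[of E E x] by auto
  have compl: "sum (compl_vec E x) (E - A) \<le> real (dual_rank E \<rho> (E - A))
                 \<longleftrightarrow> sum x A \<le> real (\<rho> A)"
    if "A \<in> D" and "sum x E = real (\<rho> E)" for A
  proof -
    have "A \<subseteq> E"
      using that(1) accessible_distrib_lattice_subset[OF lat] by blast
    then have "sum x E = sum x A + sum x (E - A)"
      using \<open>finite E\<close> by (metis add.commute sum.subset_diff)
    moreover have "real (dual_rank E \<rho> (E - A)) + real (\<rho> E) = real (card (E - A)) + real (\<rho> A)"
      using dual_rank_compl[OF um \<open>finite E\<close> that(1)] by (simp flip: of_nat_add)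
    ultimately show ?thesis
      using sum_compl_vec[of "E - A" E x] that(2) by auto
  qed
  show ?thesis
    unfolding base_polyhedron_def dual_lattice_def
    using outside top compl by (auto simp: compl_vec_def)
qed

lemma vertex_of_involution_image:
  assumes "\<And>y. y \<in> P \<Longrightarrow> \<phi> y \<in> Q" and "\<And>y. y \<in> Q \<Longrightarrow> \<phi> y \<in> P"
    and "\<And>y. y \<in> P \<Longrightarrow> \<phi> (\<phi> y) = y" and "\<And>y. y \<in> Q \<Longrightarrow> \<phi> (\<phi> y) = y"
    and convex: "\<And>a b u. \<phi> (\<lambda>e. u * a e + (1 - u) * b e) = (\<lambda>e. u * \<phi> a e + (1 - u) * \<phi> b e)"
    and vertex: "vertex_of x P"
  shows "vertex_of (\<phi> x) Q"
  unfolding vertex_of_def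
proof (intro conjI ballI allI impI)
  have "x \<in> P"
    using vertex unfolding vertex_of_def by blast
  then show "\<phi> x \<in> Q"
    by (rule assms(1))
  fix a b u assume "a \<in> Q" "b \<in> Q" and u: "0 < u \<and> u < 1 \<and> \<phi> x = (\<lambda>e. u * a e + (1 - u) * b e)"
  have "x = (\<lambda>e. u * \<phi> a e + (1 - u) * \<phi> b e)"
    using assms(3)[OF \<open>x \<in> P\<close>] u convex by metis
  then have "\<phi> a = \<phi> b"
    using vertex assms(2) \<open>a \<in> Q\<close> \<open>b \<in> Q\<close> u unfolding vertex_of_def by blast
  then show "a = b"
    using assms(4) \<open>a \<in> Q\<close> \<open>b \<in> Q\<close> by metis
qed

lemma vertex_of_dual_base_polyhedron_iff:
  assumes um: "umatroid E D \<rho>" and "finite E"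
  shows "vertex_of y (base_polyhedron E (dual_lattice E D) (dual_rank E \<rho>))
           \<longleftrightarrow> (\<exists>x. vertex_of x (base_polyhedron E D \<rho>) \<and> y = compl_vec E x)"
proof -
  let ?P = "base_polyhedron E D \<rho>" and ?Q = "base_polyhedron E (dual_lattice E D) (dual_rank E \<rho>)"
  have involution_P: "compl_vec E (compl_vec E z) = z" if "z \<in> ?P" for z
    using compl_vec_compl_vec base_polyhedron_outside[OF that] .
  have involution_Q: "compl_vec E (compl_vec E z) = z" if "z \<in> ?Q" for z
    using compl_vec_compl_vec base_polyhedron_outside[OF that] .
  have to_Q: "compl_vec E z \<in> ?Q" if "z \<in> ?P" for z
  proof -
    have "\<And>e. e \<notin> E \<Longrightarrow> z e = 0"
      using base_polyhedron_outside[OF that] .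
    from compl_vec_mem_dual_base_polyhedron_iff[where x = z, OF um \<open>finite E\<close> this]
    show ?thesis
      using that by blast
  qed
  have to_P: "compl_vec E z \<in> ?P" if "z \<in> ?Q" for z
  proof -
    have "\<And>e. e \<notin> E \<Longrightarrow> compl_vec E z e = 0"
      by (simp add: compl_vec_def)
    from compl_vec_mem_dual_base_polyhedron_iff[where x = "compl_vec E z", OF um \<open>finite E\<close> this]
    show ?thesis
      using involution_Q[OF that] that by simp
  qed
  show ?thesis
  proof
    assume y: "vertex_of y ?Q"
    then have "vertex_of (compl_vec E y) ?P"
      using vertex_of_involution_image[where \<phi> = "compl_vec E" and P = ?Q and Q = ?P,
          OF to_P to_Q involution_Q involution_P compl_vec_convex_combination] by blast
    moreover have "y = compl_vec E (compl_vec E y)"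
      using y involution_Q unfolding vertex_of_def by simp
    ultimately show "\<exists>x. vertex_of x ?P \<and> y = compl_vec E x"
      by blast
  next
    assume "\<exists>x. vertex_of x ?P \<and> y = compl_vec E x"
    then show "vertex_of y ?Q"
      using vertex_of_involution_image[where \<phi> = "compl_vec E" and P = ?P and Q = ?Q,
          OF to_Q to_P involution_P involution_Q compl_vec_convex_combination] by blast
  qed
qed

section \<open>Vertices of the base polyhedron are 0/1 vectors\<close>

lemma lattice_of_sets_covering_or_inseparable:
  fixes T :: "'a set set"
  assumes "finite T" and closed: "\<And>A B. A \<in> T \<Longrightarrow> B \<in> T \<Longrightarrow> A \<union> B \<in> T \<and> A \<inter> B \<in> T"
    and "{} \<in> T" and "E \<in> T" and "e \<in> E"
  shows "(\<exists>N\<in>T. e \<notin> N \<and> insert e N \<in> T) \<or> (\<exists>f\<in>E. f \<noteq> e \<and> (\<forall>A\<in>T. e \<in> A \<longleftrightarrow> f \<in> A))"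
proof -
  obtain M where M: "M \<in> T" "e \<in> M" "M \<subseteq> E"
    and M_minimal: "\<And>A. A \<in> T \<Longrightarrow> e \<in> A \<Longrightarrow> A \<subseteq> M \<Longrightarrow> M = A"
    using finite_has_minimal2[of "{A \<in> T. e \<in> A}" E] assms by auto
  have M_least: "M \<subseteq> A" if "A \<in> T" "e \<in> A" for A
    using M_minimal[of "A \<inter> M"] closed[OF that(1) M(1)] that(2) M(2) by blast
  obtain N where N: "N \<in> T" "N \<subseteq> M" "e \<notin> N"
    and N_maximal: "\<And>A. A \<in> T \<Longrightarrow> A \<subseteq> M \<Longrightarrow> e \<notin> A \<Longrightarrow> N \<subseteq> A \<Longrightarrow> N = A"
    using finite_has_maximal2[of "{A \<in> T. A \<subseteq> M \<and> e \<notin> A}" "{}"] assms by auto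
  have N_greatest: "A \<subseteq> N" if "A \<in> T" "A \<subseteq> M" "e \<notin> A" for A
    using N_maximal[of "A \<union> N"] closed[OF that(1) N(1)] that N by blast
  show ?thesis
  proof (cases "M = insert e N")
    case True
    then show ?thesis
      using N M(1) by blast
  next
    case False
    then obtain f where f: "f \<in> M" "f \<notin> N" "f \<noteq> e"
      using M(2) N(2) by blast
    have "e \<in> A \<longleftrightarrow> f \<in> A" if "A \<in> T" for A
      using M_least[OF that] N_greatest[of "A \<inter> M"] closed[OF that M(1)] f by blast
    then show ?thesis
      using f M(3) by blast
  qed
qed

definition tight_sets :: "'a set set \<Rightarrow> ('a set \<Rightarrow> nat) \<Rightarrow> ('a \<Rightarrow> real) \<Rightarrow> 'a set set" where
  "tight_sets D \<rho> x = {A \<in> D. sum x A = real (\<rho> A)}"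

lemma tight_sets_Un_Int:
  assumes um: "umatroid E D \<rho>" and "finite E" and x: "x \<in> base_polyhedron E D \<rho>"
    and A: "A \<in> tight_sets D \<rho> x" and B: "B \<in> tight_sets D \<rho> x"
  shows "A \<union> B \<in> tight_sets D \<rho> x \<and> A \<inter> B \<in> tight_sets D \<rho> x"
proof -
  have lat: "accessible_distrib_lattice E D"
    using um by (rule umatroid_lattice)
  have "A \<in> D" "B \<in> D"
    using A B unfolding tight_sets_def by blast+
  then have "A \<union> B \<in> D" "A \<inter> B \<in> D"
    using accessible_distrib_lattice_Un[OF lat] accessible_distrib_lattice_Int[OF lat] by blast+
  moreover have "sum x (A \<union> B) + sum x (A \<inter> B) = sum x A + sum x B"
    using sum.union_inter accessible_distrib_lattice_finite[OF lat \<open>finite E\<close>]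
      \<open>A \<in> D\<close> \<open>B \<in> D\<close> by metis
  moreover have "real (\<rho> (A \<union> B)) + real (\<rho> (A \<inter> B)) \<le> real (\<rho> A) + real (\<rho> B)"
    using umatroid_rank_submodular[OF um \<open>A \<in> D\<close> \<open>B \<in> D\<close>] by (simp flip: of_nat_add)
  moreover have "sum x (A \<union> B) \<le> real (\<rho> (A \<union> B))" "sum x (A \<inter> B) \<le> real (\<rho> (A \<inter> B))"
    using x \<open>A \<union> B \<in> D\<close> \<open>A \<inter> B \<in> D\<close> unfolding base_polyhedron_def by blast+
  moreover have "sum x A = real (\<rho> A)" "sum x B = real (\<rho> B)"
    using A B unfolding tight_sets_def by blast+
  ultimately show ?thesis
    unfolding tight_sets_def by auto
qed

lemma base_polyhedron_exchange:
  assumes "finite E" and "D \<subseteq> Pow E" and x: "x \<in> base_polyhedron E D \<rho>"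
    and "e \<in> E" and "f \<in> E"
    and inseparable: "\<And>A. A \<in> tight_sets D \<rho> x \<Longrightarrow> e \<in> A \<longleftrightarrow> f \<in> A"
    and slack: "\<And>A. A \<in> D \<Longrightarrow> sum x A < real (\<rho> A) \<Longrightarrow> \<bar>t\<bar> \<le> real (\<rho> A) - sum x A"
  shows "(\<lambda>i. x i + (if i = e then t else 0) - (if i = f then t else 0)) \<in> base_polyhedron E D \<rho>"
proof -
  let ?y = "\<lambda>i. x i + (if i = e then t else 0) - (if i = f then t else 0)"
  have sum_y: "sum ?y A = sum x A + ((if e \<in> A then t else 0) - (if f \<in> A then t else 0))"
    if "finite A" for A
    using that by (simp add: sum.distrib sum_subtractf)
  have "sum ?y A \<le> real (\<rho> A)" if "A \<in> D" for A
  proof -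
    have "finite A"
      using that \<open>D \<subseteq> Pow E\<close> \<open>finite E\<close> finite_subset by blast
    show ?thesis
    proof (cases "A \<in> tight_sets D \<rho> x")
      case True
      then show ?thesis
        using sum_y[OF \<open>finite A\<close>] inseparable[OF True] unfolding tight_sets_def by simp
    next
      case False
      then have "sum x A < real (\<rho> A)"
        using x that unfolding tight_sets_def base_polyhedron_def by fastforce
      then show ?thesis
        using sum_y[OF \<open>finite A\<close>] slack[OF that] by (auto split: if_splits)
    qed
  qed
  moreover have "sum ?y E = real (\<rho> E)"
    using sum_y[OF \<open>finite E\<close>] x \<open>e \<in> E\<close> \<open>f \<in> E\<close> unfolding base_polyhedron_def by simp
  ultimately show ?thesis
    using x \<open>e \<in> E\<close> \<open>f \<in> E\<close> unfolding base_polyhedron_def by auto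
qed

lemma finite_positive_lower_bound:
  fixes g :: "'b \<Rightarrow> real"
  assumes "finite D"
  obtains \<epsilon> where "\<epsilon> > 0" and "\<And>A. A \<in> D \<Longrightarrow> 0 < g A \<Longrightarrow> \<epsilon> \<le> g A"
proof
  let ?S = "insert 1 (g ` {A \<in> D. 0 < g A})"
  have "finite ?S"
    using assms by simp
  then show "Min ?S > 0"
    by (auto simp: Min_gr_iff)
  show "Min ?S \<le> g A" if "A \<in> D" "0 < g A" for A
    using \<open>finite ?S\<close> that by (intro Min_le) auto
qed

lemma base_polyhedron_not_vertex:
  assumes "finite E" and "D \<subseteq> Pow E" and x: "x \<in> base_polyhedron E D \<rho>"
    and "e \<in> E" and "f \<in> E" and "e \<noteq> f"
    and inseparable: "\<And>A. A \<in> tight_sets D \<rho> x \<Longrightarrow> e \<in> A \<longleftrightarrow> f \<in> A"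
  shows "\<not> vertex_of x (base_polyhedron E D \<rho>)"
proof
  assume vertex: "vertex_of x (base_polyhedron E D \<rho>)"
  have "finite D"
    using assms(1,2) by (simp add: finite_subset)
  then obtain \<epsilon> :: real where "\<epsilon> > 0"
    and slack: "\<And>A. A \<in> D \<Longrightarrow> 0 < real (\<rho> A) - sum x A \<Longrightarrow> \<epsilon> \<le> real (\<rho> A) - sum x A"
    using finite_positive_lower_bound[where g = "\<lambda>A. real (\<rho> A) - sum x A"] by blast
  define y where "y t = (\<lambda>i. x i + (if i = e then t else 0) - (if i = f then t else 0))" for t
  have "y t \<in> base_polyhedron E D \<rho>" if "\<bar>t\<bar> = \<epsilon>" for t
    unfolding y_def using base_polyhedron_exchange[OF assms(1-5) inseparable] slack that by simp
  then have "y \<epsilon> \<in> base_polyhedron E D \<rho>" "y (- \<epsilon>) \<in> base_polyhedron E D \<rho>"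
    using \<open>\<epsilon> > 0\<close> by simp_all
  moreover have "0 < (1 / 2 :: real) \<and> 1 / 2 < (1 :: real)
      \<and> x = (\<lambda>i. 1 / 2 * y \<epsilon> i + (1 - 1 / 2) * y (- \<epsilon>) i)"
    unfolding y_def by (auto simp: fun_eq_iff field_simps)
  ultimately have "y \<epsilon> = y (- \<epsilon>)"
    using vertex unfolding vertex_of_def by blast
  then have "y \<epsilon> e = y (- \<epsilon>) e"
    by simp
  then show False
    using \<open>e \<noteq> f\<close> \<open>\<epsilon> > 0\<close> unfolding y_def by simp
qed

lemma vertex_of_base_polyhedron_01:
  assumes um: "umatroid E D \<rho>" and "finite E"
    and vertex: "vertex_of x (base_polyhedron E D \<rho>)" and "e \<in> E"
  shows "x e = 0 \<or> x e = 1"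
proof -
  have lat: "accessible_distrib_lattice E D"
    using um by (rule umatroid_lattice)
  have x: "x \<in> base_polyhedron E D \<rho>"
    using vertex unfolding vertex_of_def by blast
  have "finite D"
    using accessible_distrib_lattice_subset[OF lat] \<open>finite E\<close> by (simp add: finite_subset)
  then have "finite (tight_sets D \<rho> x)"
    unfolding tight_sets_def by simp
  moreover have "{} \<in> tight_sets D \<rho> x" "E \<in> tight_sets D \<rho> x"
    using x accessible_distrib_lattice_empty[OF lat] accessible_distrib_lattice_top[OF lat]
      umatroid_rank_empty[OF um] unfolding tight_sets_def base_polyhedron_def by auto
  ultimately consider (covering) N where "N \<in> tight_sets D \<rho> x" "e \<notin> N" "insert e N \<in> tight_sets D \<rho> x"
    | (inseparable) f where "f \<in> E" "f \<noteq> e" "\<forall>A\<in>tight_sets D \<rho> x. e \<in> A \<longleftrightarrow> f \<in> A"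
    using lattice_of_sets_covering_or_inseparable[of "tight_sets D \<rho> x" E e]
      tight_sets_Un_Int[OF um \<open>finite E\<close> x] \<open>e \<in> E\<close> by blast
  then show ?thesis
  proof cases
    case covering
    then have "N \<in> D" "insert e N \<in> D" and tight: "sum x N = real (\<rho> N)"
        "sum x (insert e N) = real (\<rho> (insert e N))"
      unfolding tight_sets_def by blast+
    then have "\<rho> N \<le> \<rho> (insert e N)" "\<rho> (insert e N) \<le> \<rho> N + 1"
      using umatroid_rank_mono[OF um] umatroid_rank_insert[OF um] by blast+
    moreover have "sum x (insert e N) = x e + sum x N"
      using \<open>e \<notin> N\<close> accessible_distrib_lattice_finite[OF lat \<open>finite E\<close> \<open>N \<in> D\<close>] by simp
    ultimately show ?thesis
      using tight by (auto simp: le_Suc_eq)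
  next
    case inseparable
    then show ?thesis
      using base_polyhedron_not_vertex[OF \<open>finite E\<close> accessible_distrib_lattice_subset[OF lat] x
          \<open>e \<in> E\<close>] vertex by blast
  qed
qed

lemma umatroid_bases_dual:
  assumes um: "umatroid E D \<rho>" and "finite E"
  shows "umatroid_bases E (dual_lattice E D) (dual_rank E \<rho>) = {E - B | B. B \<in> umatroid_bases E D \<rho>}"
proof -
  let ?P = "base_polyhedron E D \<rho>"
  have support: "{e \<in> E. compl_vec E x e \<noteq> 0} = E - {e \<in> E. x e \<noteq> 0}" if "vertex_of x ?P" for x
    using vertex_of_base_polyhedron_01[OF um \<open>finite E\<close> that] by (auto simp: compl_vec_def)
  have "umatroid_bases E (dual_lattice E D) (dual_rank E \<rho>)
      = {E - {e \<in> E. x e \<noteq> 0} | x. vertex_of x ?P}"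
    unfolding umatroid_bases_def vertex_of_dual_base_polyhedron_iff[OF um \<open>finite E\<close>]
    using support by auto
  also have "\<dots> = {E - B | B. B \<in> umatroid_bases E D \<rho>}"
    unfolding umatroid_bases_def by blast
  finally show ?thesis .
qed

theorem proposition6p2:
  fixes E :: "'a set" and P :: "('a \<times> 'a) set" and \<B> :: "'a set set"
  assumes "finite E"
    and "partial_order_on E P"
    and "\<exists>D \<rho>. umatroid E D \<rho> \<and> char_poset E D = P \<and> umatroid_bases E D \<rho> = \<B>"
  shows "\<exists>D' \<rho>'. umatroid E D' \<rho>' \<and> char_poset E D' = P\<inverse> \<and>
           umatroid_bases E D' \<rho>' = {E - B | B. B \<in> \<B>}"
proof -
  obtain D \<rho> where um: "umatroid E D \<rho>"
    and poset: "char_poset E D = P" and bases: "umatroid_bases E D \<rho> = \<B>"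
    using assms(3) by blast
  have "umatroid E (dual_lattice E D) (dual_rank E \<rho>)"
    using um \<open>finite E\<close> by (rule umatroid_dual)
  moreover have "char_poset E (dual_lattice E D) = P\<inverse>"
    using poset by (simp add: char_poset_dual_lattice)
  moreover have "umatroid_bases E (dual_lattice E D) (dual_rank E \<rho>) = {E - B | B. B \<in> \<B>}"
    using umatroid_bases_dual[OF um \<open>finite E\<close>] bases by simp
  ultimately show ?thesis
    by blast
qed

end
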